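(* Safe squares are closed under finite products and coproducts: if, for $i=1,2$, the commuting squares with $p_i:Z_i\to X_i$, $f_i:X_i\to W_i$, $q_i:Z_i\to Y_i$, $g_i:Y_i\to W_i$ (with $f_i\circ p_i=g_i\circ q_i$) are safe squares, then the square with $p_1\times p_2$, $f_1\times f_2$, $q_1\times q_2$, $g_1\times g_2$ is a safe square, and likewise the square with $p_1+p_2$, $f_1+f_2$, $q_1+q_2$, $g_1+g_2$ is a safe square.
   Context: Nominal sets over a countably infinite set $\mathcal V$ of names; products with coordinatewise action, coproducts as disjoint unions. For an equivariant $f:X\to Y$: $u$ is $f$-safe if $|\mathsf{supp}(u)|=\max\{|\mathsf{supp}(v)|:v\in f^{-1}(f(u))\}$; $\mathsf{bv}_f(u)=\mathsf{supp}(u)\setminus\mathsf{supp}(f(u))$; for finite $S$, $S\#v$ means $S\cap\mathsf{supp}(v)=\emptyset$. A commuting square $p:Z\to X$, $f:X\to W$, $q:Z\to Y$, $g:Y\to W$ ($f\circ p=g\circ q$) is a safe square if for every $f$-safe $u\in X$ and $v\in Y$ with $f(u)=g(v)$ and $\mathsf{bv}_f(u)\#v$ there is a $q$-safe $z\in Z$ with $p(z)=u$ and $q(z)=v$. *)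

theory Defs
  imports Main
begin

type_synonym name = nat
type_synonym perm = "name \<Rightarrow> name"

definition fperm :: "perm \<Rightarrow> bool" where
  "fperm \<pi> \<longleftrightarrow> bij \<pi> \<and> finite {a. \<pi> a \<noteq> a}"

record 'a nomset =
  ncarrier :: "'a set"
  nact :: "perm \<Rightarrow> 'a \<Rightarrow> 'a"

definition supports :: "'a nomset \<Rightarrow> name set \<Rightarrow> 'a \<Rightarrow> bool" where
  "supports X S x \<longleftrightarrow>
     (\<forall>\<pi>. fperm \<pi> \<and> (\<forall>a\<in>S. \<pi> a = a) \<longrightarrow> nact X \<pi> x = x)"

definition nominal_set :: "'a nomset \<Rightarrow> bool" where
  "nominal_set X \<longleftrightarrow>
     (\<forall>x\<in>ncarrier X. nact X id x = x) \<and>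
     (\<forall>\<pi> x. fperm \<pi> \<and> x \<in> ncarrier X \<longrightarrow> nact X \<pi> x \<in> ncarrier X) \<and>
     (\<forall>\<pi> \<sigma> x. fperm \<pi> \<and> fperm \<sigma> \<and> x \<in> ncarrier X \<longrightarrow>
        nact X (\<pi> \<circ> \<sigma>) x = nact X \<pi> (nact X \<sigma> x)) \<and>
     (\<forall>x\<in>ncarrier X. \<exists>S. finite S \<and> supports X S x)"

definition supp :: "'a nomset \<Rightarrow> 'a \<Rightarrow> name set" where
  "supp X x = \<Inter>{S. finite S \<and> supports X S x}"

definition equivariant :: "'a nomset \<Rightarrow> 'b nomset \<Rightarrow> ('a \<Rightarrow> 'b) \<Rightarrow> bool" where
  "equivariant X Y f \<longleftrightarrow>
     (\<forall>x\<in>ncarrier X. f x \<in> ncarrier Y) \<and>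
     (\<forall>\<pi> x. fperm \<pi> \<and> x \<in> ncarrier X \<longrightarrow> f (nact X \<pi> x) = nact Y \<pi> (f x))"

definition prod_nom :: "'a nomset \<Rightarrow> 'b nomset \<Rightarrow> ('a \<times> 'b) nomset" where
  "prod_nom X Y = \<lparr> ncarrier = ncarrier X \<times> ncarrier Y,
                    nact = (\<lambda>\<pi> (x, y). (nact X \<pi> x, nact Y \<pi> y)) \<rparr>"

definition sum_nom :: "'a nomset \<Rightarrow> 'b nomset \<Rightarrow> ('a + 'b) nomset" where
  "sum_nom X Y = \<lparr> ncarrier = ncarrier X <+> ncarrier Y,
                   nact = (\<lambda>\<pi>. map_sum (nact X \<pi>) (nact Y \<pi>)) \<rparr>"

definition f_safe :: "'a nomset \<Rightarrow> ('a \<Rightarrow> 'b) \<Rightarrow> 'a \<Rightarrow> bool" where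
  "f_safe X f u \<longleftrightarrow> u \<in> ncarrier X \<and>
     (\<forall>v\<in>ncarrier X. f v = f u \<longrightarrow> card (supp X v) \<le> card (supp X u))"

definition bv :: "'a nomset \<Rightarrow> 'b nomset \<Rightarrow> ('a \<Rightarrow> 'b) \<Rightarrow> 'a \<Rightarrow> name set" where
  "bv X W f u = supp X u - supp W (f u)"

definition fresh :: "'a nomset \<Rightarrow> name set \<Rightarrow> 'a \<Rightarrow> bool" where
  "fresh X S v \<longleftrightarrow> S \<inter> supp X v = {}"

definition safe_square ::
  "'z nomset \<Rightarrow> 'x nomset \<Rightarrow> 'y nomset \<Rightarrow> 'w nomset \<Rightarrow>
   ('z \<Rightarrow> 'x) \<Rightarrow> ('x \<Rightarrow> 'w) \<Rightarrow> ('z \<Rightarrow> 'y) \<Rightarrow> ('y \<Rightarrow> 'w) \<Rightarrow> bool" where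
  "safe_square Z X Y W p f q g \<longleftrightarrow>
     (\<forall>z\<in>ncarrier Z. f (p z) = g (q z)) \<and>
     (\<forall>u v. f_safe X f u \<and> v \<in> ncarrier Y \<and> f u = g v \<and> fresh Y (bv X W f u) v \<longrightarrow>
        (\<exists>z\<in>ncarrier Z. f_safe Z q z \<and> p z = u \<and> q z = v))"

end

theory Submission
  imports Defs "HOL-Combinatorics.Permutations"
begin

text \<open>Coproducts are immediate: supports, fibres and freshness of \<open>Inl\<close>/\<open>Inr\<close> elements are those
  of the summands. For products, the support of a pair is the union of the supports. If \<open>(u\<^sub>1, u\<^sub>2)\<close>
  is safe, then each \<open>u\<^sub>i\<close> is safe and its bound names do not occur in the other component, for
  otherwise renaming them apart, which does not leave the fibre, would enlarge the support of the pair.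
  Hence the freshness hypothesis splits into the components, and the two safe squares provide lifts
  \<open>z\<^sub>1\<close>, \<open>z\<^sub>2\<close>. Renaming these by permutations that fix the supports of \<open>u\<^sub>i\<close> and \<open>v\<^sub>i\<close>, until they
  share only names common to \<open>v\<^sub>1\<close> and \<open>v\<^sub>2\<close>, gives a pair whose support is as large as any in its
  fibre, since every element of that fibre shares at least those names.\<close>

section \<open>Finitary permutations\<close>

lemma fperm_iff_permutes: "fperm \<pi> \<longleftrightarrow> (\<exists>S. finite S \<and> \<pi> permutes S)"
proof
  assume "fperm \<pi>"
  then have "\<pi> permutes {a. \<pi> a \<noteq> a}" "finite {a. \<pi> a \<noteq> a}"
    by (simp_all add: fperm_def permutes_def bij_iff)
  then show "\<exists>S. finite S \<and> \<pi> permutes S" by blast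
next
  assume "\<exists>S. finite S \<and> \<pi> permutes S"
  then obtain S where "finite S" "\<pi> permutes S" by blast
  moreover have "{a. \<pi> a \<noteq> a} \<subseteq> S" using \<open>\<pi> permutes S\<close> permutes_not_in by fastforce
  ultimately show "fperm \<pi>" unfolding fperm_def by (metis permutes_bij finite_subset)
qed

lemma fperm_id: "fperm id"
  by (simp add: fperm_def)

lemma fperm_transpose: "fperm (transpose a b)"
proof -
  have "transpose a b permutes {a, b}" by (rule permutes_swap_id) simp_all
  then show ?thesis unfolding fperm_iff_permutes by (intro exI[of _ "{a, b}"]) simp
qed

lemma fperm_comp:
  assumes "fperm \<pi>" "fperm \<sigma>" shows "fperm (\<pi> \<circ> \<sigma>)"
proof -
  obtain S T where "finite S" "\<pi> permutes S" "finite T" "\<sigma> permutes T"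
    using assms unfolding fperm_iff_permutes by blast
  then have "\<pi> \<circ> \<sigma> permutes S \<union> T"
    by (intro permutes_compose permutes_subset[OF _ Un_upper1] permutes_subset[OF _ Un_upper2])
  with \<open>finite S\<close> \<open>finite T\<close> show ?thesis
    unfolding fperm_iff_permutes by (intro exI[of _ "S \<union> T"]) simp
qed

lemma fperm_inv: "fperm \<pi> \<Longrightarrow> fperm (inv \<pi>)"
  unfolding fperm_iff_permutes using permutes_inv by blast

lemma fperm_inv_cancel:
  assumes "fperm \<pi>" shows "\<pi> \<circ> inv \<pi> = id" "inv \<pi> \<circ> \<pi> = id"
  using assms unfolding fperm_iff_permutes by (auto simp: permutes_inv_o)

lemma fperm_inj: "fperm \<pi> \<Longrightarrow> inj \<pi>"
  unfolding fperm_def by (simp add: bij_is_inj)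

lemma ex_fresh_name: "finite (S :: name set) \<Longrightarrow> \<exists>c. c \<notin> S"
  by (rule ex_new_if_finite[OF infinite_UNIV_nat])

lemma fperm_fixing_induct [consumes 2, case_names id transpose]:
  assumes "fperm \<pi>" "\<forall>a\<in>S. \<pi> a = a"
    and "P id"
    and "\<And>a b \<sigma>. a \<notin> S \<Longrightarrow> b \<notin> S \<Longrightarrow> fperm \<sigma> \<Longrightarrow> P \<sigma> \<Longrightarrow> P (transpose a b \<circ> \<sigma>)"
  shows "P \<pi>"
proof -
  let ?M = "{a. \<pi> a \<noteq> a}"
  have "\<pi> permutes ?M" "finite ?M"
    using assms(1) by (simp_all add: fperm_def permutes_def bij_iff)
  then show ?thesis
  proof (induction rule: permutes_induct)
    case id
    show ?case by (rule assms(3))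
  next
    case (swap a b \<sigma>)
    then have "fperm \<sigma>" using \<open>finite ?M\<close> fperm_iff_permutes by blast
    then show ?case using swap assms(2) by (intro assms(4)) auto
  qed
qed

lemma ex_fperm_image_avoiding:
  assumes "finite D" "finite F" "finite G" "D \<inter> F = {}"
  shows "\<exists>\<pi>. fperm \<pi> \<and> (\<forall>a\<in>F. \<pi> a = a) \<and> \<pi> ` D \<inter> G = {}"
  using assms
proof (induction D rule: finite_induct)
  case empty
  show ?case using fperm_id by auto
next
  case (insert d D)
  have "D \<inter> F = {}" using insert.prems(3) by blast
  then obtain \<pi> where \<pi>: "fperm \<pi>" "\<forall>a\<in>F. \<pi> a = a" "\<pi> ` D \<inter> G = {}"
    using insert.IH insert.prems(1,2) by blast
  have "finite (G \<union> F \<union> \<pi> ` D \<union> {\<pi> d})" using insert.hyps(1) insert.prems(1,2) by simp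
  then obtain c where c: "c \<notin> G \<union> F \<union> \<pi> ` D \<union> {\<pi> d}"
    using ex_fresh_name by meson
  have inj: "inj \<pi>" using fperm_inj[OF \<pi>(1)] .
  have "\<pi> d \<notin> F"
  proof
    assume "\<pi> d \<in> F"
    then have "\<pi> (\<pi> d) = \<pi> d" using \<pi>(2) by blast
    then have "d \<in> F" using \<open>\<pi> d \<in> F\<close> inj by (simp add: inj_eq)
    then show False using insert.prems(3) by blast
  qed
  then have "\<forall>a\<in>F. (transpose (\<pi> d) c \<circ> \<pi>) a = a" using \<pi>(2) c by (auto simp: transpose_def)
  moreover have "(transpose (\<pi> d) c \<circ> \<pi>) ` insert d D \<inter> G = {}"
  proof -
    have "\<pi> e \<noteq> \<pi> d" if "e \<in> D" for e using that insert.hyps(2) inj by (auto simp: inj_eq)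
    then show ?thesis using c \<pi>(3) by (auto simp: transpose_def)
  qed
  ultimately show ?case using fperm_comp[OF fperm_transpose \<pi>(1)] by blast
qed

section \<open>Supports\<close>

lemma nominal_set_act_id: "nominal_set X \<Longrightarrow> x \<in> ncarrier X \<Longrightarrow> nact X id x = x"
  by (simp add: nominal_set_def)

lemma nominal_set_act_closed:
  "nominal_set X \<Longrightarrow> fperm \<pi> \<Longrightarrow> x \<in> ncarrier X \<Longrightarrow> nact X \<pi> x \<in> ncarrier X"
  by (simp add: nominal_set_def)

lemma nominal_set_act_comp:
  "nominal_set X \<Longrightarrow> fperm \<pi> \<Longrightarrow> fperm \<sigma> \<Longrightarrow> x \<in> ncarrier X \<Longrightarrow>
   nact X (\<pi> \<circ> \<sigma>) x = nact X \<pi> (nact X \<sigma> x)"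
  by (simp add: nominal_set_def)

lemma nominal_set_act_inv:
  assumes X: "nominal_set X" and x: "x \<in> ncarrier X" and \<pi>: "fperm \<pi>"
  shows "nact X (inv \<pi>) (nact X \<pi> x) = x" "nact X \<pi> (nact X (inv \<pi>) x) = x"
  using nominal_set_act_comp[OF X fperm_inv[OF \<pi>] \<pi> x] nominal_set_act_comp[OF X \<pi> fperm_inv[OF \<pi>] x]
    fperm_inv_cancel[OF \<pi>] nominal_set_act_id[OF X x] by simp_all

lemma supp_least: "finite S \<Longrightarrow> supports X S x \<Longrightarrow> supp X x \<subseteq> S"
  unfolding supp_def by blast

lemma finite_supp: "nominal_set X \<Longrightarrow> x \<in> ncarrier X \<Longrightarrow> finite (supp X x)"
  unfolding nominal_set_def by (metis finite_subset supp_least)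

lemma supports_transpose_fixes:
  "supports X S x \<Longrightarrow> a \<notin> S \<Longrightarrow> b \<notin> S \<Longrightarrow> nact X (transpose a b) x = x"
  unfolding supports_def using fperm_transpose by (metis transpose_apply_other)

text \<open>Two names outside the support may lie in different finite supporting sets; swapping them
  through a third, fresh name \<open>c\<close> uses each supporting set separately.\<close>

lemma transpose_fresh_fixes:
  assumes X: "nominal_set X" and x: "x \<in> ncarrier X"
    and a: "a \<notin> supp X x" and b: "b \<notin> supp X x"
  shows "nact X (transpose a b) x = x"
proof (cases "a = b")
  case True
  then show ?thesis using nominal_set_act_id[OF X x] by simp
next
  case False
  obtain Sa where Sa: "finite Sa" "supports X Sa x" "a \<notin> Sa" using a unfolding supp_def by blast
  obtain Sb where Sb: "finite Sb" "supports X Sb x" "b \<notin> Sb" using b unfolding supp_def by blast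
  have "finite (Sa \<union> Sb \<union> {a, b})" using Sa(1) Sb(1) by simp
  then obtain c where c: "c \<notin> Sa \<union> Sb \<union> {a, b}" using ex_fresh_name by meson
  have ac: "nact X (transpose a c) x = x" using supports_transpose_fixes[OF Sa(2,3)] c by blast
  have cb: "nact X (transpose c b) x = x" using supports_transpose_fixes[OF Sb(2)] Sb(3) c by blast
  have "transpose a b = transpose a c \<circ> transpose c b \<circ> transpose a c"
    using transpose_comp_triple[of a b c] False c by simp
  then show ?thesis
    using nominal_set_act_comp[OF X _ _ x] nominal_set_act_comp[OF X _ _ x] fperm_transpose fperm_comp
    by (metis ac cb)
qed

lemma supports_supp:
  assumes X: "nominal_set X" and x: "x \<in> ncarrier X"
  shows "supports X (supp X x) x"
  unfolding supports_def
proof (intro allI impI, elim conjE)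
  fix \<pi> assume "fperm \<pi>" "\<forall>a\<in>supp X x. \<pi> a = a"
  then show "nact X \<pi> x = x"
  proof (induction rule: fperm_fixing_induct)
    case id
    show ?case using nominal_set_act_id[OF X x] .
  next
    case (transpose a b \<sigma>)
    have "nact X (transpose a b \<circ> \<sigma>) x = nact X (transpose a b) (nact X \<sigma> x)"
      using nominal_set_act_comp[OF X fperm_transpose transpose(3) x] .
    also have "\<dots> = x" using transpose transpose_fresh_fixes[OF X x] by simp
    finally show ?case .
  qed
qed

lemma supp_fixes:
  assumes "nominal_set X" "x \<in> ncarrier X" "fperm \<pi>" "\<forall>a\<in>supp X x. \<pi> a = a"
  shows "nact X \<pi> x = x"
  using supports_supp[OF assms(1,2)] assms(3,4) unfolding supports_def by blast

lemma equivariant_closed: "equivariant X Y f \<Longrightarrow> x \<in> ncarrier X \<Longrightarrow> f x \<in> ncarrier Y"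
  unfolding equivariant_def by blast

lemma equivariant_act:
  "equivariant X Y f \<Longrightarrow> fperm \<pi> \<Longrightarrow> x \<in> ncarrier X \<Longrightarrow> f (nact X \<pi> x) = nact Y \<pi> (f x)"
  unfolding equivariant_def by blast

lemma supp_equivariant_subset:
  assumes f: "equivariant X Y f" and x: "x \<in> ncarrier X"
  shows "supp Y (f x) \<subseteq> supp X x"
proof -
  have "supports Y S (f x)" if S: "supports X S x" for S
    unfolding supports_def
  proof (intro allI impI, elim conjE)
    fix \<pi> assume "fperm \<pi>" "\<forall>a\<in>S. \<pi> a = a"
    then show "nact Y \<pi> (f x) = f x"
      using S equivariant_act[OF f \<open>fperm \<pi>\<close> x] unfolding supports_def by simp
  qed
  then show ?thesis unfolding supp_def by (intro Inter_anti_mono) blast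
qed

lemma equivariant_act_fixing_supp:
  assumes Y: "nominal_set Y" and f: "equivariant X Y f" and x: "x \<in> ncarrier X"
    and \<pi>: "fperm \<pi>" "\<forall>a\<in>A. \<pi> a = a" and A: "supp Y (f x) \<subseteq> A"
  shows "f (nact X \<pi> x) = f x"
proof -
  have "nact Y \<pi> (f x) = f x" using supp_fixes[OF Y equivariant_closed[OF f x] \<pi>(1)] \<pi>(2) A by blast
  then show ?thesis using equivariant_act[OF f \<pi>(1) x] by simp
qed

lemma supp_nact_subset:
  assumes X: "nominal_set X" and x: "x \<in> ncarrier X" and \<pi>: "fperm \<pi>"
  shows "supp X (nact X \<pi> x) \<subseteq> \<pi> ` supp X x"
proof (rule supp_least)
  show "finite (\<pi> ` supp X x)" using finite_supp[OF X x] by simp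
  show "supports X (\<pi> ` supp X x) (nact X \<pi> x)" unfolding supports_def
  proof (intro allI impI, elim conjE)
    fix \<sigma> assume \<sigma>: "fperm \<sigma>" "\<forall>a\<in>\<pi> ` supp X x. \<sigma> a = a"
    define \<tau> where "\<tau> = inv \<pi> \<circ> \<sigma> \<circ> \<pi>"
    have \<tau>: "fperm \<tau>" unfolding \<tau>_def using \<sigma>(1) \<pi> by (simp add: fperm_comp fperm_inv)
    have "\<forall>a\<in>supp X x. \<tau> a = a"
      using \<sigma>(2) fperm_inv_cancel(2)[OF \<pi>] unfolding \<tau>_def by (metis comp_apply id_apply image_eqI)
    then have "nact X \<tau> x = x" using supp_fixes[OF X x \<tau>] by blast
    moreover have "\<sigma> \<circ> \<pi> = \<pi> \<circ> \<tau>" unfolding \<tau>_def using fperm_inv_cancel(1)[OF \<pi>]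
      by (simp add: comp_assoc[symmetric])
    ultimately show "nact X \<sigma> (nact X \<pi> x) = nact X \<pi> x"
      using nominal_set_act_comp[OF X \<sigma>(1) \<pi> x] nominal_set_act_comp[OF X \<pi> \<tau> x] by simp
  qed
qed

lemma supp_nact:
  assumes X: "nominal_set X" and x: "x \<in> ncarrier X" and \<pi>: "fperm \<pi>"
  shows "supp X (nact X \<pi> x) = \<pi> ` supp X x"
proof
  show "supp X (nact X \<pi> x) \<subseteq> \<pi> ` supp X x" by (rule supp_nact_subset[OF X x \<pi>])
  have "supp X x \<subseteq> inv \<pi> ` supp X (nact X \<pi> x)"
    using supp_nact_subset[OF X nominal_set_act_closed[OF X \<pi> x] fperm_inv[OF \<pi>]]
      nominal_set_act_inv(1)[OF X x \<pi>] by simp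
  then have "\<pi> ` supp X x \<subseteq> (\<pi> \<circ> inv \<pi>) ` supp X (nact X \<pi> x)" by (auto simp: image_comp[symmetric])
  then show "\<pi> ` supp X x \<subseteq> supp X (nact X \<pi> x)" using fperm_inv_cancel(1)[OF \<pi>] by simp
qed

lemma card_supp_nact:
  assumes "nominal_set X" "x \<in> ncarrier X" "fperm \<pi>"
  shows "card (supp X (nact X \<pi> x)) = card (supp X x)"
  using supp_nact[OF assms] fperm_inj[OF assms(3)] by (simp add: card_image inj_on_subset)

lemma ex_fperm_supp_avoiding:
  assumes X: "nominal_set X" and x: "x \<in> ncarrier X" and "finite F" "finite G"
  shows "\<exists>\<pi>. fperm \<pi> \<and> (\<forall>a\<in>F. \<pi> a = a) \<and> supp X (nact X \<pi> x) \<inter> G \<subseteq> F"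
proof -
  obtain \<pi> where \<pi>: "fperm \<pi>" "\<forall>a\<in>F. \<pi> a = a" "\<pi> ` (supp X x - F) \<inter> G = {}"
    using ex_fperm_image_avoiding[of "supp X x - F" F G] finite_supp[OF X x] assms(3,4) by auto
  have "supp X (nact X \<pi> x) \<subseteq> F \<union> \<pi> ` (supp X x - F)"
    using supp_nact[OF X x \<pi>(1)] \<pi>(2) by auto
  then show ?thesis using \<pi> by blast
qed

text \<open>Renaming first \<open>z\<^sub>1\<close> away from \<open>z\<^sub>2\<close> and then \<open>z\<^sub>2\<close> away from the renamed \<open>z\<^sub>1\<close>;
  the hypothesis on \<open>A\<^sub>2\<close> makes the second renaming keep the overlap inside \<open>A\<^sub>1\<close>.\<close>

lemma ex_fperms_supp_apart:
  assumes Z1: "nominal_set Z1" and Z2: "nominal_set Z2"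
    and z1: "z1 \<in> ncarrier Z1" and z2: "z2 \<in> ncarrier Z2"
    and A1: "finite A1" and A2: "A2 \<subseteq> supp Z2 z2"
  shows "\<exists>\<pi>1 \<pi>2. fperm \<pi>1 \<and> fperm \<pi>2 \<and> (\<forall>a\<in>A1. \<pi>1 a = a) \<and> (\<forall>a\<in>A2. \<pi>2 a = a) \<and>
           supp Z1 (nact Z1 \<pi>1 z1) \<inter> supp Z2 (nact Z2 \<pi>2 z2) \<subseteq> A1 \<inter> A2"
proof -
  obtain \<pi>1 where \<pi>1: "fperm \<pi>1" "\<forall>a\<in>A1. \<pi>1 a = a"
      "supp Z1 (nact Z1 \<pi>1 z1) \<inter> supp Z2 z2 \<subseteq> A1"
    using ex_fperm_supp_avoiding[OF Z1 z1 A1 finite_supp[OF Z2 z2]] by blast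
  have "finite A2" using A2 finite_supp[OF Z2 z2] by (rule finite_subset)
  then obtain \<pi>2 where \<pi>2: "fperm \<pi>2" "\<forall>a\<in>A2. \<pi>2 a = a"
      "supp Z2 (nact Z2 \<pi>2 z2) \<inter> supp Z1 (nact Z1 \<pi>1 z1) \<subseteq> A2"
    using ex_fperm_supp_avoiding[OF Z2 z2 _ finite_supp[OF Z1 nominal_set_act_closed[OF Z1 \<pi>1(1) z1]]]
    by blast
  have "supp Z1 (nact Z1 \<pi>1 z1) \<inter> supp Z2 (nact Z2 \<pi>2 z2) \<subseteq> A1 \<inter> A2"
    using \<pi>1(3) \<pi>2(3) A2 by blast
  with \<pi>1 \<pi>2 show ?thesis by blast
qed

section \<open>Products and coproducts of nominal sets\<close>

lemma supp_prod_nom: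
  assumes X: "nominal_set X" and Y: "nominal_set Y" and x: "x \<in> ncarrier X" and y: "y \<in> ncarrier Y"
  shows "supp (prod_nom X Y) (x, y) = supp X x \<union> supp Y y"
proof
  have "supports (prod_nom X Y) (supp X x \<union> supp Y y) (x, y)"
    using supp_fixes[OF X x] supp_fixes[OF Y y] unfolding supports_def prod_nom_def by simp
  then show "supp (prod_nom X Y) (x, y) \<subseteq> supp X x \<union> supp Y y"
    using finite_supp[OF X x] finite_supp[OF Y y] by (simp add: supp_least)
  have "supp X x \<union> supp Y y \<subseteq> S" if "finite S" "supports (prod_nom X Y) S (x, y)" for S
  proof -
    have "supports X S x" "supports Y S y" using that(2) unfolding supports_def prod_nom_def by auto
    then show ?thesis by (meson Un_least supp_least that(1))
  qed
  then show "supp X x \<union> supp Y y \<subseteq> supp (prod_nom X Y) (x, y)"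
    unfolding supp_def[of "prod_nom X Y"] by blast
qed

lemma supp_sum_nom_Inl [simp]: "supp (sum_nom X Y) (Inl x) = supp X x"
  unfolding supp_def supports_def sum_nom_def by simp

lemma supp_sum_nom_Inr [simp]: "supp (sum_nom X Y) (Inr y) = supp Y y"
  unfolding supp_def supports_def sum_nom_def by simp

section \<open>Safe elements\<close>

lemma f_safe_nact:
  assumes Z: "nominal_set Z" and Y: "nominal_set Y" and q: "equivariant Z Y q"
    and z: "f_safe Z q z" and \<pi>: "fperm \<pi>"
  shows "f_safe Z q (nact Z \<pi> z)"
proof -
  have z_in: "z \<in> ncarrier Z" using z by (simp add: f_safe_def)
  have "card (supp Z y) \<le> card (supp Z (nact Z \<pi> z))"
    if y: "y \<in> ncarrier Z" and fibre: "q y = q (nact Z \<pi> z)" for y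
  proof -
    define y' where "y' = nact Z (inv \<pi>) y"
    have y'_in: "y' \<in> ncarrier Z" unfolding y'_def using nominal_set_act_closed[OF Z fperm_inv[OF \<pi>] y] .
    have "q y' = nact Y (inv \<pi>) (nact Y \<pi> (q z))"
      unfolding y'_def using equivariant_act[OF q fperm_inv[OF \<pi>] y] fibre equivariant_act[OF q \<pi> z_in]
      by simp
    also have "\<dots> = q z" using nominal_set_act_inv(1)[OF Y equivariant_closed[OF q z_in] \<pi>] .
    finally have "card (supp Z y') \<le> card (supp Z z)" using z y'_in by (simp add: f_safe_def)
    then show ?thesis unfolding y'_def
      using card_supp_nact[OF Z y fperm_inv[OF \<pi>]] card_supp_nact[OF Z z_in \<pi>] by simp
  qed
  then show ?thesis using nominal_set_act_closed[OF Z \<pi> z_in] by (simp add: f_safe_def)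
qed

text \<open>An element \<open>y\<close> of the fibre of \<open>u\<close> can be renamed, without leaving the fibre, so that its
  support meets \<open>B\<close> only inside \<open>supp (f u)\<close>; comparing \<open>supp y \<union> B\<close> for this renamed
  element with \<open>supp u \<union> B\<close> bounds \<open>card (supp y)\<close>, and for \<open>y = u\<close> shows that
  \<open>supp u \<inter> B \<subseteq> supp (f u)\<close>.\<close>

lemma f_safe_if_max_card_supp_Un:
  assumes X: "nominal_set X" and W: "nominal_set W" and f: "equivariant X W f"
    and u: "u \<in> ncarrier X" and B: "finite B"
    and max: "\<And>y. y \<in> ncarrier X \<Longrightarrow> f y = f u \<Longrightarrow> card (supp X y \<union> B) \<le> card (supp X u \<union> B)"
  shows "f_safe X f u \<and> bv X W f u \<inter> B = {}"
proof -
  define F where "F = supp W (f u)"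
  define U where "U = supp X u"
  have F: "finite F" unfolding F_def using finite_supp[OF W equivariant_closed[OF f u]] .
  have U: "finite U" unfolding U_def using finite_supp[OF X u] .
  have FU: "F \<subseteq> U" unfolding F_def U_def using supp_equivariant_subset[OF f u] .
  have key: "card (supp X y) + card (U \<inter> B) \<le> card U + card (F \<inter> B)"
    if y: "y \<in> ncarrier X" and fibre: "f y = f u" for y
  proof -
    obtain \<pi> where \<pi>: "fperm \<pi>" "\<forall>a\<in>F. \<pi> a = a" "supp X (nact X \<pi> y) \<inter> B \<subseteq> F"
      using ex_fperm_supp_avoiding[OF X y F B] by blast
    define y' where "y' = nact X \<pi> y"
    have y'_in: "y' \<in> ncarrier X" unfolding y'_def using nominal_set_act_closed[OF X \<pi>(1) y] .
    have "supp W (f y) \<subseteq> F" using fibre F_def by simp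
    then have "f y' = f u"
      unfolding y'_def using equivariant_act_fixing_supp[OF W f y \<pi>(1,2)] fibre by simp
    then have "card (supp X y' \<union> B) \<le> card (U \<union> B)" using max[OF y'_in] unfolding U_def by simp
    moreover have "card (supp X y') = card (supp X y)"
      unfolding y'_def using card_supp_nact[OF X y \<pi>(1)] .
    moreover have "card (supp X y' \<inter> B) \<le> card (F \<inter> B)"
      using \<pi>(3) F unfolding y'_def by (intro card_mono) auto
    moreover have "card (supp X y') + card B = card (supp X y' \<union> B) + card (supp X y' \<inter> B)"
      using card_Un_Int[OF finite_supp[OF X y'_in] B] .
    moreover have "card U + card B = card (U \<union> B) + card (U \<inter> B)"
      using card_Un_Int[OF U B] .
    ultimately show ?thesis by linarith
  qed
  have FB_le: "card (F \<inter> B) \<le> card (U \<inter> B)" using FU U by (intro card_mono) auto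
  have "f_safe X f u"
    unfolding f_safe_def using u key FB_le U_def by fastforce
  moreover have "card (U \<inter> B) \<le> card (F \<inter> B)" using key[OF u refl] unfolding U_def by simp
  then have "F \<inter> B = U \<inter> B" using FU U FB_le by (intro card_subset_eq) auto
  then have "bv X W f u \<inter> B = {}" unfolding bv_def F_def U_def by blast
  ultimately show ?thesis by blast
qed

lemma f_safe_prod_nom_D:
  assumes X1: "nominal_set X1" and X2: "nominal_set X2"
    and W1: "nominal_set W1" and W2: "nominal_set W2"
    and f1: "equivariant X1 W1 f1" and f2: "equivariant X2 W2 f2"
    and u: "f_safe (prod_nom X1 X2) (map_prod f1 f2) (u1, u2)"
  shows "f_safe X1 f1 u1 \<and> bv X1 W1 f1 u1 \<inter> supp X2 u2 = {}"
    and "f_safe X2 f2 u2 \<and> bv X2 W2 f2 u2 \<inter> supp X1 u1 = {}"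
proof -
  have u1: "u1 \<in> ncarrier X1" and u2: "u2 \<in> ncarrier X2"
    using u by (auto simp: f_safe_def prod_nom_def)
  have max: "card (supp X1 y1 \<union> supp X2 y2) \<le> card (supp X1 u1 \<union> supp X2 u2)"
    if "y1 \<in> ncarrier X1" "y2 \<in> ncarrier X2" "f1 y1 = f1 u1" "f2 y2 = f2 u2" for y1 y2
    using u that supp_prod_nom[OF X1 X2] u1 u2 unfolding f_safe_def by (auto simp: prod_nom_def)
  show "f_safe X1 f1 u1 \<and> bv X1 W1 f1 u1 \<inter> supp X2 u2 = {}"
    using f_safe_if_max_card_supp_Un[OF X1 W1 f1 u1 finite_supp[OF X2 u2]] max u2 by blast
  show "f_safe X2 f2 u2 \<and> bv X2 W2 f2 u2 \<inter> supp X1 u1 = {}"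
    using f_safe_if_max_card_supp_Un[OF X2 W2 f2 u2 finite_supp[OF X1 u1]] max u1
    by (metis sup_commute)
qed

lemma f_safe_prod_nom_pair:
  assumes Z1: "nominal_set Z1" and Z2: "nominal_set Z2"
    and q1: "equivariant Z1 Y1 q1" and q2: "equivariant Z2 Y2 q2"
    and z1: "f_safe Z1 q1 z1" and z2: "f_safe Z2 q2 z2"
    and overlap: "supp Z1 z1 \<inter> supp Z2 z2 \<subseteq> supp Y1 (q1 z1) \<inter> supp Y2 (q2 z2)"
  shows "f_safe (prod_nom Z1 Z2) (map_prod q1 q2) (z1, z2)"
  unfolding f_safe_def
proof (intro conjI ballI impI)
  have z1_in: "z1 \<in> ncarrier Z1" and z2_in: "z2 \<in> ncarrier Z2" using z1 z2 by (auto simp: f_safe_def)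
  then show "(z1, z2) \<in> ncarrier (prod_nom Z1 Z2)" by (simp add: prod_nom_def)
  fix y assume y: "y \<in> ncarrier (prod_nom Z1 Z2)" and fibre: "map_prod q1 q2 y = map_prod q1 q2 (z1, z2)"
  obtain y1 y2 where y_eq: "y = (y1, y2)" by fastforce
  have y1: "y1 \<in> ncarrier Z1" and y2: "y2 \<in> ncarrier Z2" using y y_eq by (auto simp: prod_nom_def)
  have q_eq: "q1 y1 = q1 z1" "q2 y2 = q2 z2" using fibre y_eq by auto
  have "card (supp Z1 z1 \<inter> supp Z2 z2) \<le> card (supp Z1 y1 \<inter> supp Z2 y2)"
  proof (rule card_mono)
    show "finite (supp Z1 y1 \<inter> supp Z2 y2)" using finite_supp[OF Z1 y1] by simp
    show "supp Z1 z1 \<inter> supp Z2 z2 \<subseteq> supp Z1 y1 \<inter> supp Z2 y2"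
      using overlap supp_equivariant_subset[OF q1 y1] supp_equivariant_subset[OF q2 y2] q_eq by auto
  qed
  moreover have "card (supp Z1 y1) \<le> card (supp Z1 z1)" "card (supp Z2 y2) \<le> card (supp Z2 z2)"
    using z1 z2 y1 y2 q_eq by (simp_all add: f_safe_def)
  moreover have "card (supp Z1 y1) + card (supp Z2 y2)
      = card (supp Z1 y1 \<union> supp Z2 y2) + card (supp Z1 y1 \<inter> supp Z2 y2)"
    using card_Un_Int[OF finite_supp[OF Z1 y1] finite_supp[OF Z2 y2]] .
  moreover have "card (supp Z1 z1) + card (supp Z2 z2)
      = card (supp Z1 z1 \<union> supp Z2 z2) + card (supp Z1 z1 \<inter> supp Z2 z2)"
    using card_Un_Int[OF finite_supp[OF Z1 z1_in] finite_supp[OF Z2 z2_in]] .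
  ultimately show "card (supp (prod_nom Z1 Z2) y) \<le> card (supp (prod_nom Z1 Z2) (z1, z2))"
    using supp_prod_nom[OF Z1 Z2 y1 y2] supp_prod_nom[OF Z1 Z2 z1_in z2_in] y_eq by simp
qed

section \<open>Safe squares\<close>

definition admissible_pair ::
  "'x nomset \<Rightarrow> 'y nomset \<Rightarrow> 'w nomset \<Rightarrow> ('x \<Rightarrow> 'w) \<Rightarrow> ('y \<Rightarrow> 'w) \<Rightarrow> 'x \<Rightarrow> 'y \<Rightarrow> bool" where
  "admissible_pair X Y W f g u v \<longleftrightarrow>
     f_safe X f u \<and> v \<in> ncarrier Y \<and> f u = g v \<and> fresh Y (bv X W f u) v"

lemma safe_square_iff:
  "safe_square Z X Y W p f q g \<longleftrightarrow> (\<forall>z\<in>ncarrier Z. f (p z) = g (q z)) \<and>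
     (\<forall>u v. admissible_pair X Y W f g u v \<longrightarrow> (\<exists>z\<in>ncarrier Z. f_safe Z q z \<and> p z = u \<and> q z = v))"
  by (simp add: safe_square_def admissible_pair_def)

lemma admissible_pair_prod_nom_D:
  assumes X1: "nominal_set X1" and X2: "nominal_set X2" and Y1: "nominal_set Y1"
    and Y2: "nominal_set Y2" and W1: "nominal_set W1" and W2: "nominal_set W2"
    and f1: "equivariant X1 W1 f1" and f2: "equivariant X2 W2 f2"
    and g1: "equivariant Y1 W1 g1" and g2: "equivariant Y2 W2 g2"
    and adm: "admissible_pair (prod_nom X1 X2) (prod_nom Y1 Y2) (prod_nom W1 W2)
                (map_prod f1 f2) (map_prod g1 g2) (u1, u2) (v1, v2)"
  shows "admissible_pair X1 Y1 W1 f1 g1 u1 v1" and "admissible_pair X2 Y2 W2 f2 g2 u2 v2"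
    and "(supp X1 u1 \<union> supp Y1 v1) \<inter> (supp X2 u2 \<union> supp Y2 v2) \<subseteq> supp Y1 v1 \<inter> supp Y2 v2"
proof -
  have u_safe: "f_safe (prod_nom X1 X2) (map_prod f1 f2) (u1, u2)"
    and v1: "v1 \<in> ncarrier Y1" and v2: "v2 \<in> ncarrier Y2"
    and e1: "f1 u1 = g1 v1" and e2: "f2 u2 = g2 v2"
    using adm by (auto simp: admissible_pair_def prod_nom_def)
  have u1: "u1 \<in> ncarrier X1" and u2: "u2 \<in> ncarrier X2"
    using u_safe by (auto simp: f_safe_def prod_nom_def)
  note safe1 = f_safe_prod_nom_D(1)[OF X1 X2 W1 W2 f1 f2 u_safe]
  note safe2 = f_safe_prod_nom_D(2)[OF X1 X2 W1 W2 f1 f2 u_safe]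
  have sub1: "supp W1 (f1 u1) \<subseteq> supp X1 u1 \<inter> supp Y1 v1"
    using supp_equivariant_subset[OF f1 u1] supp_equivariant_subset[OF g1 v1] e1 by simp
  have sub2: "supp W2 (f2 u2) \<subseteq> supp X2 u2 \<inter> supp Y2 v2"
    using supp_equivariant_subset[OF f2 u2] supp_equivariant_subset[OF g2 v2] e2 by simp
  have "fresh (prod_nom Y1 Y2) (bv (prod_nom X1 X2) (prod_nom W1 W2) (map_prod f1 f2) (u1, u2)) (v1, v2)"
    using adm by (simp add: admissible_pair_def)
  then have "(supp X1 u1 \<union> supp X2 u2 - (supp W1 (f1 u1) \<union> supp W2 (f2 u2))) \<inter> (supp Y1 v1 \<union> supp Y2 v2) = {}"
    unfolding fresh_def bv_def map_prod_simp supp_prod_nom[OF X1 X2 u1 u2] supp_prod_nom[OF Y1 Y2 v1 v2]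
      supp_prod_nom[OF W1 W2 equivariant_closed[OF f1 u1] equivariant_closed[OF f2 u2]] .
  then show "admissible_pair X1 Y1 W1 f1 g1 u1 v1" and "admissible_pair X2 Y2 W2 f2 g2 u2 v2"
    and "(supp X1 u1 \<union> supp Y1 v1) \<inter> (supp X2 u2 \<union> supp Y2 v2) \<subseteq> supp Y1 v1 \<inter> supp Y2 v2"
    using safe1 safe2 sub1 sub2 v1 v2 e1 e2
    unfolding admissible_pair_def fresh_def bv_def by blast+
qed

lemma ex_lift_prod_nom:
  assumes Z1: "nominal_set Z1" and Z2: "nominal_set Z2" and X1: "nominal_set X1"
    and X2: "nominal_set X2" and Y1: "nominal_set Y1" and Y2: "nominal_set Y2"
    and p1: "equivariant Z1 X1 p1" and p2: "equivariant Z2 X2 p2"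
    and q1: "equivariant Z1 Y1 q1" and q2: "equivariant Z2 Y2 q2"
    and z1: "f_safe Z1 q1 z1" "p1 z1 = u1" "q1 z1 = v1"
    and z2: "f_safe Z2 q2 z2" "p2 z2 = u2" "q2 z2 = v2"
    and overlap: "(supp X1 u1 \<union> supp Y1 v1) \<inter> (supp X2 u2 \<union> supp Y2 v2) \<subseteq> supp Y1 v1 \<inter> supp Y2 v2"
  shows "\<exists>z\<in>ncarrier (prod_nom Z1 Z2). f_safe (prod_nom Z1 Z2) (map_prod q1 q2) z \<and>
           map_prod p1 p2 z = (u1, u2) \<and> map_prod q1 q2 z = (v1, v2)"
proof -
  define A1 where "A1 = supp X1 u1 \<union> supp Y1 v1"
  define A2 where "A2 = supp X2 u2 \<union> supp Y2 v2"
  have z1_in: "z1 \<in> ncarrier Z1" and z2_in: "z2 \<in> ncarrier Z2" using z1 z2 by (auto simp: f_safe_def)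
  have A1: "finite A1" "supp X1 (p1 z1) \<subseteq> A1" "supp Y1 (q1 z1) \<subseteq> A1"
    unfolding A1_def using finite_supp[OF X1 equivariant_closed[OF p1 z1_in]]
      finite_supp[OF Y1 equivariant_closed[OF q1 z1_in]] z1(2,3) by auto
  have A2: "A2 \<subseteq> supp Z2 z2" "supp X2 (p2 z2) \<subseteq> A2" "supp Y2 (q2 z2) \<subseteq> A2"
    unfolding A2_def using supp_equivariant_subset[OF p2 z2_in] supp_equivariant_subset[OF q2 z2_in] z2(2,3)
    by auto
  obtain \<pi>1 \<pi>2 where \<pi>: "fperm \<pi>1" "fperm \<pi>2" "\<forall>a\<in>A1. \<pi>1 a = a" "\<forall>a\<in>A2. \<pi>2 a = a"
      and apart: "supp Z1 (nact Z1 \<pi>1 z1) \<inter> supp Z2 (nact Z2 \<pi>2 z2) \<subseteq> A1 \<inter> A2"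
    using ex_fperms_supp_apart[OF Z1 Z2 z1_in z2_in A1(1) A2(1)] by blast
  define z1' where "z1' = nact Z1 \<pi>1 z1"
  define z2' where "z2' = nact Z2 \<pi>2 z2"
  have images: "p1 z1' = u1" "q1 z1' = v1" "p2 z2' = u2" "q2 z2' = v2"
    unfolding z1'_def z2'_def
    using equivariant_act_fixing_supp[OF X1 p1 z1_in \<pi>(1,3) A1(2)]
      equivariant_act_fixing_supp[OF Y1 q1 z1_in \<pi>(1,3) A1(3)]
      equivariant_act_fixing_supp[OF X2 p2 z2_in \<pi>(2,4) A2(2)]
      equivariant_act_fixing_supp[OF Y2 q2 z2_in \<pi>(2,4) A2(3)] z1(2,3) z2(2,3)
    by simp_all
  have "f_safe (prod_nom Z1 Z2) (map_prod q1 q2) (z1', z2')"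
  proof (rule f_safe_prod_nom_pair[OF Z1 Z2 q1 q2])
    show "f_safe Z1 q1 z1'" unfolding z1'_def using f_safe_nact[OF Z1 Y1 q1 z1(1) \<pi>(1)] .
    show "f_safe Z2 q2 z2'" unfolding z2'_def using f_safe_nact[OF Z2 Y2 q2 z2(1) \<pi>(2)] .
    show "supp Z1 z1' \<inter> supp Z2 z2' \<subseteq> supp Y1 (q1 z1') \<inter> supp Y2 (q2 z2')"
      unfolding images(2,4) using apart overlap
      unfolding A1_def A2_def z1'_def[symmetric] z2'_def[symmetric] by blast
  qed
  moreover have "(z1', z2') \<in> ncarrier (prod_nom Z1 Z2)"
    unfolding z1'_def z2'_def prod_nom_def
    using nominal_set_act_closed[OF Z1 \<pi>(1) z1_in] nominal_set_act_closed[OF Z2 \<pi>(2) z2_in] by simp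
  ultimately show ?thesis using images by (intro bexI[of _ "(z1', z2')"]) simp_all
qed

lemma safe_square_prod_nom:
  assumes Z1: "nominal_set Z1" and X1: "nominal_set X1" and Y1: "nominal_set Y1" and W1: "nominal_set W1"
    and Z2: "nominal_set Z2" and X2: "nominal_set X2" and Y2: "nominal_set Y2" and W2: "nominal_set W2"
    and p1: "equivariant Z1 X1 p1" and f1: "equivariant X1 W1 f1"
    and q1: "equivariant Z1 Y1 q1" and g1: "equivariant Y1 W1 g1"
    and p2: "equivariant Z2 X2 p2" and f2: "equivariant X2 W2 f2"
    and q2: "equivariant Z2 Y2 q2" and g2: "equivariant Y2 W2 g2"
    and safe1: "safe_square Z1 X1 Y1 W1 p1 f1 q1 g1"
    and safe2: "safe_square Z2 X2 Y2 W2 p2 f2 q2 g2"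
  shows "safe_square (prod_nom Z1 Z2) (prod_nom X1 X2) (prod_nom Y1 Y2) (prod_nom W1 W2)
           (map_prod p1 p2) (map_prod f1 f2) (map_prod q1 q2) (map_prod g1 g2)"
  unfolding safe_square_iff
proof (intro conjI allI impI)
  show "\<forall>z\<in>ncarrier (prod_nom Z1 Z2). map_prod f1 f2 (map_prod p1 p2 z) = map_prod g1 g2 (map_prod q1 q2 z)"
    using safe1 safe2 by (auto simp: safe_square_def prod_nom_def)
  fix u v
  assume adm: "admissible_pair (prod_nom X1 X2) (prod_nom Y1 Y2) (prod_nom W1 W2)
                 (map_prod f1 f2) (map_prod g1 g2) u v"
  obtain u1 u2 v1 v2 where uv: "u = (u1, u2)" "v = (v1, v2)" by fastforce
  note adm_D = admissible_pair_prod_nom_D[OF X1 X2 Y1 Y2 W1 W2 f1 f2 g1 g2 adm[unfolded uv]]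
  obtain z1 where "f_safe Z1 q1 z1" "p1 z1 = u1" "q1 z1 = v1"
    using safe1 adm_D(1) unfolding safe_square_iff by blast
  moreover obtain z2 where "f_safe Z2 q2 z2" "p2 z2 = u2" "q2 z2 = v2"
    using safe2 adm_D(2) unfolding safe_square_iff by blast
  ultimately show "\<exists>z\<in>ncarrier (prod_nom Z1 Z2). f_safe (prod_nom Z1 Z2) (map_prod q1 q2) z \<and>
      map_prod p1 p2 z = u \<and> map_prod q1 q2 z = v"
    using ex_lift_prod_nom[OF Z1 Z2 X1 X2 Y1 Y2 p1 p2 q1 q2 _ _ _ _ _ _ adm_D(3)] uv by blast
qed

lemma ncarrier_sum_nom: "ncarrier (sum_nom X Y) = ncarrier X <+> ncarrier Y"
  by (simp add: sum_nom_def)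

lemma Ball_Plus: "(\<forall>x\<in>A <+> B. P x) \<longleftrightarrow> (\<forall>a\<in>A. P (Inl a)) \<and> (\<forall>b\<in>B. P (Inr b))"
  by blast

lemma f_safe_sum_nom_Inl [simp]: "f_safe (sum_nom X1 X2) (map_sum f1 f2) (Inl u) \<longleftrightarrow> f_safe X1 f1 u"
  by (auto simp: f_safe_def ncarrier_sum_nom Ball_Plus)

lemma f_safe_sum_nom_Inr [simp]: "f_safe (sum_nom X1 X2) (map_sum f1 f2) (Inr u) \<longleftrightarrow> f_safe X2 f2 u"
  by (auto simp: f_safe_def ncarrier_sum_nom Ball_Plus)

lemma admissible_pair_sum_nom [simp]:
  "admissible_pair (sum_nom X1 X2) (sum_nom Y1 Y2) (sum_nom W1 W2) (map_sum f1 f2) (map_sum g1 g2)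
     (Inl u1) (Inl v1) \<longleftrightarrow> admissible_pair X1 Y1 W1 f1 g1 u1 v1"
  "admissible_pair (sum_nom X1 X2) (sum_nom Y1 Y2) (sum_nom W1 W2) (map_sum f1 f2) (map_sum g1 g2)
     (Inr u2) (Inr v2) \<longleftrightarrow> admissible_pair X2 Y2 W2 f2 g2 u2 v2"
  "\<not> admissible_pair (sum_nom X1 X2) (sum_nom Y1 Y2) (sum_nom W1 W2) (map_sum f1 f2) (map_sum g1 g2)
     (Inl u1) (Inr v2)"
  "\<not> admissible_pair (sum_nom X1 X2) (sum_nom Y1 Y2) (sum_nom W1 W2) (map_sum f1 f2) (map_sum g1 g2)
     (Inr u2) (Inl v1)"
  by (auto simp: admissible_pair_def fresh_def bv_def ncarrier_sum_nom)

lemma safe_square_sum_nom: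
  assumes safe1: "safe_square Z1 X1 Y1 W1 p1 f1 q1 g1"
    and safe2: "safe_square Z2 X2 Y2 W2 p2 f2 q2 g2"
  shows "safe_square (sum_nom Z1 Z2) (sum_nom X1 X2) (sum_nom Y1 Y2) (sum_nom W1 W2)
           (map_sum p1 p2) (map_sum f1 f2) (map_sum q1 q2) (map_sum g1 g2)"
  unfolding safe_square_iff
proof (intro conjI allI impI)
  show "\<forall>z\<in>ncarrier (sum_nom Z1 Z2). map_sum f1 f2 (map_sum p1 p2 z) = map_sum g1 g2 (map_sum q1 q2 z)"
    using safe1 safe2 by (auto simp: safe_square_def sum_nom_def)
  fix u v
  assume "admissible_pair (sum_nom X1 X2) (sum_nom Y1 Y2) (sum_nom W1 W2)
            (map_sum f1 f2) (map_sum g1 g2) u v"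
  then consider (Inl) u1 v1 where "u = Inl u1" "v = Inl v1" "admissible_pair X1 Y1 W1 f1 g1 u1 v1"
    | (Inr) u2 v2 where "u = Inr u2" "v = Inr v2" "admissible_pair X2 Y2 W2 f2 g2 u2 v2"
    by (cases u; cases v) auto
  then show "\<exists>z\<in>ncarrier (sum_nom Z1 Z2). f_safe (sum_nom Z1 Z2) (map_sum q1 q2) z \<and>
      map_sum p1 p2 z = u \<and> map_sum q1 q2 z = v"
  proof cases
    case Inl
    then obtain z1 where "z1 \<in> ncarrier Z1" "f_safe Z1 q1 z1" "p1 z1 = u1" "q1 z1 = v1"
      using safe1 unfolding safe_square_iff by blast
    then show ?thesis using Inl by (intro bexI[of _ "Inl z1"]) (auto simp: ncarrier_sum_nom)
  next
    case Inr
    then obtain z2 where "z2 \<in> ncarrier Z2" "f_safe Z2 q2 z2" "p2 z2 = u2" "q2 z2 = v2"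
      using safe2 unfolding safe_square_iff by blast
    then show ?thesis using Inr by (intro bexI[of _ "Inr z2"]) (auto simp: ncarrier_sum_nom)
  qed
qed

theorem lemma5p37:
  fixes Z1 :: "'z1 nomset" and X1 :: "'x1 nomset" and Y1 :: "'y1 nomset" and W1 :: "'w1 nomset"
    and Z2 :: "'z2 nomset" and X2 :: "'x2 nomset" and Y2 :: "'y2 nomset" and W2 :: "'w2 nomset"
    and p1 :: "'z1 \<Rightarrow> 'x1" and f1 :: "'x1 \<Rightarrow> 'w1" and q1 :: "'z1 \<Rightarrow> 'y1" and g1 :: "'y1 \<Rightarrow> 'w1"
    and p2 :: "'z2 \<Rightarrow> 'x2" and f2 :: "'x2 \<Rightarrow> 'w2" and q2 :: "'z2 \<Rightarrow> 'y2" and g2 :: "'y2 \<Rightarrow> 'w2"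
  assumes nom1: "nominal_set Z1" "nominal_set X1" "nominal_set Y1" "nominal_set W1"
    and nom2: "nominal_set Z2" "nominal_set X2" "nominal_set Y2" "nominal_set W2"
    and eqv1: "equivariant Z1 X1 p1" "equivariant X1 W1 f1"
              "equivariant Z1 Y1 q1" "equivariant Y1 W1 g1"
    and eqv2: "equivariant Z2 X2 p2" "equivariant X2 W2 f2"
              "equivariant Z2 Y2 q2" "equivariant Y2 W2 g2"
    and safe1: "safe_square Z1 X1 Y1 W1 p1 f1 q1 g1"
    and safe2: "safe_square Z2 X2 Y2 W2 p2 f2 q2 g2"
  shows "safe_square (prod_nom Z1 Z2) (prod_nom X1 X2) (prod_nom Y1 Y2) (prod_nom W1 W2)
           (map_prod p1 p2) (map_prod f1 f2) (map_prod q1 q2) (map_prod g1 g2)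
       \<and> safe_square (sum_nom Z1 Z2) (sum_nom X1 X2) (sum_nom Y1 Y2) (sum_nom W1 W2)
           (map_sum p1 p2) (map_sum f1 f2) (map_sum q1 q2) (map_sum g1 g2)"
  using safe_square_prod_nom[OF nom1 nom2 eqv1 eqv2 safe1 safe2] safe_square_sum_nom[OF safe1 safe2]
  by blast

end
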